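(* Fix $\alpha\in(0,1/2)$ and $\theta<0$ with $$\theta>\frac{-\log 2}{\Phi^{-1}(\alpha)-\Phi^{-1}(\alpha/2)}$$ (e.g. for $\alpha=0.025$ this holds for $-2.46<\theta<0$). Then Hommel's procedure $D^H_i(\mathbf p)=\mathbb I\big(p_i\le\alpha/2\ \text{or}\ \max(p_1,p_2)\le\alpha\big)$, $i=1,2$, controls the FWER in the strong sense at level $\alpha$, is marginally nominal $\alpha$, and satisfies $\Pi_1(D^H)\ge\Pi_1(D)$ for every marginally nominal $\alpha$ procedure $D$ that controls the FWER in the strong sense at level $\alpha$.
   Context: Model: $\Theta=\mathbb R^2$, $\vartheta=(\theta_1,\theta_2)$, $p_i=\Phi(\theta_i+Z_i)$ where $Z_1,Z_2$ are independent standard normal and $\Phi$ is the standard normal CDF; the $i$th null hypothesis is true ($h_i=0$) iff $\theta_i\ge0$. A procedure is a measurable $D=(D_1,D_2):[0,1]^2\to\{0,1\}^2$ ($D_i=1$: reject the $i$th null). Strong FWER control at level $\alpha$: $P_\vartheta(\text{some true null is rejected})\le\alpha$ for all $\vartheta$. Marginally nominal $\alpha$: $D_i(\mathbf p)=0$ whenever $p_i>\alpha$. Objective: $\Pi_1(D)=\tfrac12\big[P_{(\theta,0)}(D_1(\mathbf p)=1)+P_{(0,\theta)}(D_2(\mathbf p)=1)\big]$, the expected number of true discoveries when exactly one null is false, each with probability $1/2$, the false one having parameter $\theta$. *)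

theory Defs
  imports "HOL-Probability.Probability"
begin

definition std_normal_M :: "real measure" where
  "std_normal_M = density lborel std_normal_density"

definition Phi :: "real \<Rightarrow> real" where
  "Phi x = measure std_normal_M {..x}"

definition Phi_inv :: "real \<Rightarrow> real" where
  "Phi_inv a = (THE x. Phi x = a)"

definition Z_M :: "(real \<times> real) measure" where
  "Z_M = std_normal_M \<Otimes>\<^sub>M std_normal_M"

definition pvals :: "real \<Rightarrow> real \<Rightarrow> real \<times> real \<Rightarrow> real \<times> real" where
  "pvals t1 t2 z = (Phi (t1 + fst z), Phi (t2 + snd z))"

definition Pr :: "real \<Rightarrow> real \<Rightarrow> (real \<times> real \<Rightarrow> bool) \<Rightarrow> real" where
  "Pr t1 t2 E = measure Z_M {z \<in> space Z_M. E (pvals t1 t2 z)}"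

(* A procedure: D p = (D_1 p, D_2 p), True = reject; measurable on [0,1]^2 *)
definition is_procedure :: "(real \<times> real \<Rightarrow> bool \<times> bool) \<Rightarrow> bool" where
  "is_procedure D \<longleftrightarrow>
     D \<in> measurable (restrict_space borel ({0..1} \<times> {0..1})) (count_space UNIV)"

(* strong FWER control at level alpha; null i true iff theta_i >= 0 *)
definition strong_FWER :: "real \<Rightarrow> (real \<times> real \<Rightarrow> bool \<times> bool) \<Rightarrow> bool" where
  "strong_FWER \<alpha> D \<longleftrightarrow>
     (\<forall>t1 t2. Pr t1 t2 (\<lambda>p. (t1 \<ge> 0 \<and> fst (D p)) \<or> (t2 \<ge> 0 \<and> snd (D p))) \<le> \<alpha>)"

definition marg_nominal :: "real \<Rightarrow> (real \<times> real \<Rightarrow> bool \<times> bool) \<Rightarrow> bool" where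
  "marg_nominal \<alpha> D \<longleftrightarrow>
     (\<forall>p1 p2. p1 \<in> {0..1} \<and> p2 \<in> {0..1} \<longrightarrow>
        (p1 > \<alpha> \<longrightarrow> \<not> fst (D (p1, p2))) \<and> (p2 > \<alpha> \<longrightarrow> \<not> snd (D (p1, p2))))"

definition Pi1 :: "real \<Rightarrow> (real \<times> real \<Rightarrow> bool \<times> bool) \<Rightarrow> real" where
  "Pi1 \<theta> D = (Pr \<theta> 0 (\<lambda>p. fst (D p)) + Pr 0 \<theta> (\<lambda>p. snd (D p))) / 2"

definition hommel :: "real \<Rightarrow> real \<times> real \<Rightarrow> bool \<times> bool" where
  "hommel \<alpha> p =
     (fst p \<le> \<alpha> / 2 \<or> max (fst p) (snd p) \<le> \<alpha>,
      snd p \<le> \<alpha> / 2 \<or> max (fst p) (snd p) \<le> \<alpha>)"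

end

theory Submission
  imports Defs
begin

text \<open>Shifting a standard normal by \<open>t\<close> multiplies its density by the likelihood ratio
  \<open>exp (t z - t\<^sup>2/2)\<close>, so \<open>\<Pi>\<^sub>1(D)\<close> is an integral over \<open>Z_M\<close> of the rejection indicators of \<open>D\<close>
  against weights \<open>w(z\<^sub>i)\<close> that decrease in \<open>z\<^sub>i\<close> (as \<open>\<theta> < 0\<close>). Of all FWER constraints only the one at
  \<open>\<theta> = 0\<close> is needed: with \<open>a = \<Phi>\<^sup>-\<^sup>1(\<alpha>)\<close>, \<open>b = \<Phi>\<^sup>-\<^sup>1(\<alpha>/2)\<close> and multiplier \<open>c = w(b)\<close>, Hommel's procedure
  maximises the Lagrangian gain pointwise among marginally nominal decisions (the hypothesis on \<open>\<theta>\<close>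
  is exactly \<open>c \<le> 2 w(a)\<close>), and it exhausts the level, rejecting something with probability exactly
  \<open>\<alpha>\<close> under the global null.\<close>


interpretation std_normal: real_distribution std_normal_M
proof -
  have "prob_space std_normal_M"
    unfolding std_normal_M_def by (rule prob_space_normal_density) simp
  then show "real_distribution std_normal_M"
    by (simp add: real_distribution_def real_distribution_axioms_def std_normal_M_def)
qed

lemma sets_std_normal_M [simp, measurable_cong]: "sets std_normal_M = sets borel"
  by (simp add: std_normal_M_def)

lemma space_std_normal_M [simp]: "space std_normal_M = UNIV"
  by (simp add: std_normal_M_def)

lemma Phi_eq_cdf: "Phi = cdf std_normal_M"
  by (simp add: Phi_def[abs_def] cdf_def)

lemma Phi_mono: "x \<le> y \<Longrightarrow> Phi x \<le> Phi y"
  unfolding Phi_eq_cdf by (rule std_normal.cdf_nondecreasing)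

lemma Phi_less:
  assumes "x < y" shows "Phi x < Phi y"
proof -
  have "emeasure std_normal_M {x<..y} \<noteq> 0"
  proof
    assume "emeasure std_normal_M {x<..y} = 0"
    then have "AE t in lborel. ennreal (std_normal_density t) * indicator {x<..y} t = 0"
      by (simp add: std_normal_M_def emeasure_density nn_integral_0_iff_AE)
    moreover have "ennreal (std_normal_density t) * indicator {x<..y} t \<noteq> 0" if "t \<in> {x<..y}" for t
      using that normal_density_pos[of 1 0 t] by simp
    ultimately have "AE t in lborel. t \<notin> {x<..y}"
      by (auto elim: eventually_mono)
    then have "emeasure lborel {x<..y} = 0"
      by (subst (asm) AE_iff_measurable[of "{x<..y}"]) auto
    then show False using assms by simp
  qed
  then have "0 < measure std_normal_M {x<..y}"
    by (simp add: std_normal.emeasure_eq_measure zero_less_measure_iff)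
  then show ?thesis
    using std_normal.cdf_diff_eq[OF assms] by (simp add: Phi_eq_cdf)
qed

lemma Phi_le_iff [simp]: "Phi x \<le> Phi y \<longleftrightarrow> x \<le> y"
  by (meson Phi_mono Phi_less not_le)

lemma Phi_less_iff [simp]: "Phi x < Phi y \<longleftrightarrow> x < y"
  by (simp add: less_le_not_le)

lemma Phi_eq_iff [simp]: "Phi x = Phi y \<longleftrightarrow> x = y"
  by (simp add: order.eq_iff)

lemma Phi_continuous: "isCont Phi x"
proof -
  have "emeasure std_normal_M {x} = 0"
    by (simp add: std_normal_M_def emeasure_density nn_integral_null_set)
  then show ?thesis
    by (simp add: Phi_eq_cdf std_normal.isCont_cdf measure_def)
qed

lemma Phi_nonneg [simp]: "0 \<le> Phi x"
  by (simp add: Phi_def)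

lemma Phi_le_one [simp]: "Phi x \<le> 1"
  by (simp add: Phi_def std_normal.prob_le_1)

lemma Phi_surj:
  assumes "0 < p" "p < 1" obtains x where "Phi x = p"
proof -
  obtain l where l: "Phi l < p"
    using order_tendstoD(2)[OF std_normal.cdf_lim_at_bot assms(1)]
    by (auto simp: Phi_eq_cdf eventually_at_bot_linorder)
  obtain r where r: "p < Phi r"
    using order_tendstoD(1)[OF std_normal.cdf_lim_at_top_prob assms(2)]
    by (auto simp: Phi_eq_cdf eventually_at_top_linorder)
  have "l \<le> r" using l r Phi_le_iff[of r l] by linarith
  with l r obtain x where "Phi x = p"
    using IVT[of Phi l p r] Phi_continuous by (auto simp: less_imp_le)
  then show ?thesis by (rule that)
qed

lemma Phi_Phi_inv:
  assumes "0 < p" "p < 1" shows "Phi (Phi_inv p) = p"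
proof -
  obtain x where x: "Phi x = p" using Phi_surj assms .
  then have "Phi_inv p = x"
    unfolding Phi_inv_def by (rule the_equality) (simp add: x[symmetric])
  with x show ?thesis by simp
qed

lemma Phi_inv_half_less:
  assumes "0 < \<alpha>" "\<alpha> < 1"
  shows "Phi_inv (\<alpha> / 2) < Phi_inv \<alpha>"
proof -
  have "Phi (Phi_inv (\<alpha> / 2)) < Phi (Phi_inv \<alpha>)"
    using assms by (simp add: Phi_Phi_inv)
  then show ?thesis by simp
qed

lemma borel_measurable_Phi [measurable]: "Phi \<in> borel_measurable borel"
  by (rule borel_measurable_mono) (simp add: mono_def)

lemma measure_std_normal_UNIV [simp]: "measure std_normal_M UNIV = 1"
  using std_normal.prob_space by simp

lemma measure_std_normal_atMost: "measure std_normal_M {..x} = Phi x"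
  by (simp add: Phi_def)

lemma measure_std_normal_greaterThan: "measure std_normal_M {x<..} = 1 - Phi x"
proof -
  have "{x<..} = UNIV - {..x}" by auto
  then show ?thesis using std_normal.prob_compl[of "{..x}"] by (simp add: Phi_def)
qed

lemma measure_std_normal_greaterThanAtMost:
  "x < y \<Longrightarrow> measure std_normal_M {x<..y} = Phi y - Phi x"
  by (simp add: Phi_eq_cdf std_normal.cdf_diff_eq)

interpretation Z: prob_space Z_M
  unfolding Z_M_def by (intro prob_space_pair std_normal.prob_space_axioms)

lemma sets_Z_M [simp, measurable_cong]: "sets Z_M = sets (borel :: (real \<times> real) measure)"
proof -
  have "sets Z_M = sets (borel \<Otimes>\<^sub>M (borel :: real measure))"
    unfolding Z_M_def by (rule sets_pair_measure_cong) simp_all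
  then show ?thesis by (metis borel_prod)
qed

lemma space_Z_M [simp]: "space Z_M = UNIV"
  using sets_eq_imp_space_eq[OF sets_Z_M] by simp

lemma borel_measurable_fst_real [measurable]: "fst \<in> borel_measurable (borel :: (real \<times> real) measure)"
  by (metis borel_prod measurable_fst)

lemma borel_measurable_snd_real [measurable]: "snd \<in> borel_measurable (borel :: (real \<times> real) measure)"
  by (metis borel_prod measurable_snd)

lemma measure_Z_M_Times:
  assumes "A \<in> sets borel" "B \<in> sets borel"
  shows "measure Z_M (A \<times> B) = measure std_normal_M A * measure std_normal_M B"
  using assms unfolding Z_M_def
  by (simp add: std_normal.emeasure_pair_measure_Times measure_def enn2real_mult)

lemma Times_in_borel [measurable]:
  "A \<in> sets borel \<Longrightarrow> B \<in> sets borel \<Longrightarrow> A \<times> B \<in> sets (borel :: (real \<times> real) measure)"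
  by (metis borel_prod pair_measureI)

text \<open>The likelihood ratio of \<open>N(t,1)\<close> with respect to \<open>N(0,1)\<close>.\<close>

definition gauss_lr :: "real \<Rightarrow> real \<Rightarrow> real" where
  "gauss_lr t x = exp (t * x - t\<^sup>2 / 2)"

lemma gauss_lr_pos [simp]: "0 < gauss_lr t x"
  by (simp add: gauss_lr_def)

lemma gauss_lr_nonneg [simp]: "0 \<le> gauss_lr t x"
  by (simp add: less_imp_le)

lemma gauss_lr_zero [simp]: "gauss_lr 0 x = 1"
  by (simp add: gauss_lr_def)

lemma borel_measurable_gauss_lr [measurable]: "gauss_lr t \<in> borel_measurable borel"
  unfolding gauss_lr_def by measurable

lemma gauss_lr_antimono: "t \<le> 0 \<Longrightarrow> x \<le> y \<Longrightarrow> gauss_lr t y \<le> gauss_lr t x"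
  by (simp add: gauss_lr_def mult_left_mono_neg)

lemma gauss_lr_le_add:
  assumes "t \<le> 0" "- ln 2 \<le> t * (a - b)" "x \<le> a" "y \<le> a"
  shows "gauss_lr t b \<le> gauss_lr t x + gauss_lr t y"
proof -
  have "t * b - t\<^sup>2 / 2 \<le> ln 2 + (t * a - t\<^sup>2 / 2)"
    using assms(2) by (simp add: algebra_simps)
  then have "exp (t * b - t\<^sup>2 / 2) \<le> exp (ln 2 + (t * a - t\<^sup>2 / 2))"
    by simp
  then have "gauss_lr t b \<le> 2 * gauss_lr t a"
    by (simp add: gauss_lr_def exp_add)
  also have "\<dots> \<le> gauss_lr t x + gauss_lr t y"
    using gauss_lr_antimono[OF assms(1) assms(3)] gauss_lr_antimono[OF assms(1) assms(4)] by simp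
  finally show ?thesis .
qed

lemma std_normal_density_shift:
  "std_normal_density (t + x) * gauss_lr t (t + x) = std_normal_density x"
proof -
  have "- (t + x)\<^sup>2 / 2 + (t * (t + x) - t\<^sup>2 / 2) = - x\<^sup>2 / 2"
    by (simp add: power2_eq_square field_simps)
  then show ?thesis
    unfolding std_normal_density_def gauss_lr_def by (simp flip: exp_add)
qed

lemma distr_std_normal_shift:
  "distr std_normal_M borel ((+) t) = density std_normal_M (gauss_lr t)"
proof (rule measure_eqI)
  fix A :: "real set" assume "A \<in> sets (distr std_normal_M borel ((+) t))"
  then have A [measurable]: "A \<in> sets borel" by simp
  have "emeasure (density std_normal_M (gauss_lr t)) A
      = (\<integral>\<^sup>+ x. ennreal (std_normal_density x) * (ennreal (gauss_lr t x) * indicator A x) \<partial>lborel)"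
    by (simp add: std_normal_M_def emeasure_density nn_integral_density)
  also have "\<dots> = (\<integral>\<^sup>+ x. ennreal (std_normal_density (t + 1 * x))
                      * (ennreal (gauss_lr t (t + 1 * x)) * indicator A (t + 1 * x)) \<partial>lborel)"
    by (subst nn_integral_real_affine[where c = 1 and t = t]) auto
  also have "\<dots> = (\<integral>\<^sup>+ x. ennreal (std_normal_density x) * indicator ((+) t -` A) x \<partial>lborel)"
    by (intro nn_integral_cong)
      (simp add: mult.assoc[symmetric] ennreal_mult[symmetric] std_normal_density_shift
        split: split_indicator)
  also have "\<dots> = emeasure (distr std_normal_M borel ((+) t)) A"
  proof -
    have "(+) t -` A \<in> sets borel" by (rule measurable_sets_borel[OF _ A]) simp
    then show ?thesis by (simp add: emeasure_distr std_normal_M_def emeasure_density)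
  qed
  finally show "emeasure (distr std_normal_M borel ((+) t)) A = emeasure (density std_normal_M (gauss_lr t)) A"
    by simp
qed simp

lemma distr_Z_M_shift:
  "distr Z_M borel (\<lambda>z. (t1 + fst z, t2 + snd z))
     = density Z_M (\<lambda>z. gauss_lr t1 (fst z) * gauss_lr t2 (snd z))"
proof -
  have sf: "sigma_finite_measure (density std_normal_M (gauss_lr t))" for t
    by (simp add: flip: distr_std_normal_shift)
      (intro prob_space_imp_sigma_finite std_normal.prob_space_distr; simp)
  have "density Z_M (\<lambda>z. gauss_lr t1 (fst z) * gauss_lr t2 (snd z))
      = density Z_M (\<lambda>(x, y). ennreal (gauss_lr t1 x) * ennreal (gauss_lr t2 y))"
    by (simp add: case_prod_beta' ennreal_mult)
  also have "\<dots> = density std_normal_M (gauss_lr t1) \<Otimes>\<^sub>M density std_normal_M (gauss_lr t2)"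
    unfolding Z_M_def
    by (rule pair_measure_density[symmetric]) (auto intro: sf std_normal.sigma_finite_measure_axioms)
  also have "\<dots> = distr Z_M (borel \<Otimes>\<^sub>M borel) (\<lambda>(x, y). (t1 + x, t2 + y))"
    unfolding Z_M_def distr_std_normal_shift[symmetric]
    by (rule pair_measure_distr) (auto intro: sf simp: distr_std_normal_shift)
  also have "\<dots> = distr Z_M borel (\<lambda>z. (t1 + fst z, t2 + snd z))"
    by (rule distr_cong) (simp_all add: case_prod_beta', metis borel_prod)
  finally show ?thesis ..
qed

lemma integrable_gauss_lr:
  "integrable Z_M (\<lambda>z. gauss_lr t1 (fst z) * gauss_lr t2 (snd z))"
proof (rule integrableI_nonneg)
  have "(\<integral>\<^sup>+ z. ennreal (gauss_lr t1 (fst z) * gauss_lr t2 (snd z)) \<partial>Z_M)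
      = emeasure (distr Z_M borel (\<lambda>z. (t1 + fst z, t2 + snd z))) UNIV"
    by (simp add: distr_Z_M_shift emeasure_density)
  also have "\<dots> = 1"
    by (simp add: emeasure_distr Z.emeasure_space_1[simplified])
  finally show "(\<integral>\<^sup>+ z. ennreal (gauss_lr t1 (fst z) * gauss_lr t2 (snd z)) \<partial>Z_M) < \<infinity>"
    by simp
qed simp_all

definition Phi_preimage :: "(real \<times> real \<Rightarrow> bool) \<Rightarrow> (real \<times> real) set" where
  "Phi_preimage E = {z. E (Phi (fst z), Phi (snd z))}"

lemma Pr_null_eq: "Pr 0 0 E = measure Z_M (Phi_preimage E)"
  by (simp add: Pr_def pvals_def Phi_preimage_def)

lemma Pr_eq_integral:
  assumes E: "Phi_preimage E \<in> sets borel"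
  shows "Pr t1 t2 E
    = (\<integral>z. indicator (Phi_preimage E) z * (gauss_lr t1 (fst z) * gauss_lr t2 (snd z)) \<partial>Z_M)"
proof -
  have "Pr t1 t2 E = measure Z_M ((\<lambda>z. (t1 + fst z, t2 + snd z)) -` Phi_preimage E \<inter> space Z_M)"
    by (simp add: Pr_def pvals_def Phi_preimage_def vimage_def)
  also have "\<dots> = measure (distr Z_M borel (\<lambda>z. (t1 + fst z, t2 + snd z))) (Phi_preimage E)"
    using E by (simp add: measure_distr)
  also have "\<dots> = (\<integral>z. indicator (Phi_preimage E) z
      \<partial>density Z_M (\<lambda>z. gauss_lr t1 (fst z) * gauss_lr t2 (snd z)))"
    by (simp add: distr_Z_M_shift)
  also have "\<dots> = (\<integral>z. (gauss_lr t1 (fst z) * gauss_lr t2 (snd z)) *\<^sub>R indicator (Phi_preimage E) z \<partial>Z_M)"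
    using E by (intro integral_density) simp_all
  finally show ?thesis by (simp add: mult.commute)
qed

lemma Phi_preimage_procedure_in_borel:
  assumes "is_procedure D"
  shows "Phi_preimage (\<lambda>p. Q (D p)) \<in> sets borel"
proof -
  have "(\<lambda>z. (Phi (fst z), Phi (snd z))) \<in> borel \<rightarrow>\<^sub>M restrict_space borel ({0..1} \<times> {0..1})"
    by (intro measurable_restrict_space2) auto
  then have "(\<lambda>z. D (Phi (fst z), Phi (snd z))) \<in> borel \<rightarrow>\<^sub>M count_space UNIV"
    using assms unfolding is_procedure_def by (rule measurable_compose)
  then have "Measurable.pred borel (\<lambda>z. Q (D (Phi (fst z), Phi (snd z))))"
    by (rule measurable_compose) simp
  then show ?thesis
    by (simp add: Phi_preimage_def pred_def)
qed

lemma hommel_Phi: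
  assumes "Phi a = \<alpha>" "Phi b = \<alpha> / 2"
  shows "hommel \<alpha> (Phi x, Phi y) = (x \<le> b \<or> x \<le> a \<and> y \<le> a, y \<le> b \<or> x \<le> a \<and> y \<le> a)"
proof -
  have "Phi u \<le> \<alpha> \<longleftrightarrow> u \<le> a" "Phi u \<le> \<alpha> / 2 \<longleftrightarrow> u \<le> b" for u
    by (subst assms(1)[symmetric], simp) (subst assms(2)[symmetric], simp)
  then show ?thesis by (simp add: hommel_def)
qed

lemma measure_hommel_region:
  assumes "b < a" "Phi a = \<alpha>" "Phi b = \<alpha> / 2"
  shows "measure Z_M {z. fst z \<le> b \<or> snd z \<le> b \<or> fst z \<le> a \<and> snd z \<le> a} = \<alpha>"
proof -
  have "{z. fst z \<le> b \<or> snd z \<le> b \<or> fst z \<le> a \<and> snd z \<le> a}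
      = {..b} \<times> UNIV \<union> ({b<..} \<times> {..b} \<union> {b<..a} \<times> {b<..a})"
    by auto
  moreover have "measure Z_M ({..b} \<times> UNIV \<union> ({b<..} \<times> {..b} \<union> {b<..a} \<times> {b<..a}))
      = measure Z_M ({..b} \<times> UNIV) + (measure Z_M ({b<..} \<times> {..b}) + measure Z_M ({b<..a} \<times> {b<..a}))"
    by (subst Z.finite_measure_Union, auto)+
  ultimately show ?thesis
    using assms by (simp add: measure_Z_M_Times measure_std_normal_atMost measure_std_normal_greaterThan
      measure_std_normal_greaterThanAtMost algebra_simps power2_eq_square)
qed

lemma is_procedure_hommel: "is_procedure (hommel \<alpha>)"
proof -
  have "hommel \<alpha> \<in> borel \<Otimes>\<^sub>M borel \<rightarrow>\<^sub>M count_space UNIV \<Otimes>\<^sub>M count_space UNIV"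
    unfolding hommel_def by measurable
  then have "hommel \<alpha> \<in> borel \<rightarrow>\<^sub>M count_space UNIV"
    by (simp add: borel_prod pair_measure_countable)
  then show ?thesis
    unfolding is_procedure_def by (rule measurable_restrict_space1)
qed

lemma marg_nominal_hommel: "0 < \<alpha> \<Longrightarrow> marg_nominal \<alpha> (hommel \<alpha>)"
  by (auto simp: marg_nominal_def hommel_def)

lemma strong_FWER_hommel:
  assumes "0 < \<alpha>" "\<alpha> < 1"
  shows "strong_FWER \<alpha> (hommel \<alpha>)"
  unfolding strong_FWER_def
proof (intro allI)
  fix t1 t2 :: real
  define a b where "a = Phi_inv \<alpha>" and "b = Phi_inv (\<alpha> / 2)"
  have Phi_ab: "Phi a = \<alpha>" "Phi b = \<alpha> / 2"
    using assms by (simp_all add: a_def b_def Phi_Phi_inv)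
  have "b < a"
    using Phi_inv_half_less assms by (simp add: a_def b_def)
  define E where "E = {z. 0 \<le> t1 \<and> (t1 + fst z \<le> b \<or> t1 + fst z \<le> a \<and> t2 + snd z \<le> a)
                        \<or> 0 \<le> t2 \<and> (t2 + snd z \<le> b \<or> t1 + fst z \<le> a \<and> t2 + snd z \<le> a)}"
  have "Pr t1 t2 (\<lambda>p. 0 \<le> t1 \<and> fst (hommel \<alpha> p) \<or> 0 \<le> t2 \<and> snd (hommel \<alpha> p)) = measure Z_M E"
    by (simp add: Pr_def pvals_def hommel_Phi[OF Phi_ab] E_def)
  also have "\<dots> \<le> \<alpha>"
  proof (cases "0 \<le> t1"; cases "0 \<le> t2")
    assume "0 \<le> t1" "0 \<le> t2"
    then have "E \<subseteq> {z. fst z \<le> b \<or> snd z \<le> b \<or> fst z \<le> a \<and> snd z \<le> a}"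
      unfolding E_def by auto
    then show ?thesis
      using Z.finite_measure_mono measure_hommel_region[OF \<open>b < a\<close> Phi_ab] by fastforce
  next
    assume "0 \<le> t1" "\<not> 0 \<le> t2"
    then have "E \<subseteq> {..a} \<times> UNIV"
      unfolding E_def using \<open>b < a\<close> by auto
    then show ?thesis
      using Z.finite_measure_mono[of E "{..a} \<times> UNIV"] measure_Z_M_Times[of "{..a}" UNIV]
      by (simp add: measure_std_normal_atMost Phi_ab Times_in_borel)
  next
    assume "\<not> 0 \<le> t1" "0 \<le> t2"
    then have "E \<subseteq> UNIV \<times> {..a}"
      unfolding E_def using \<open>b < a\<close> by auto
    then show ?thesis
      using Z.finite_measure_mono[of E "UNIV \<times> {..a}"] measure_Z_M_Times[of UNIV "{..a}"]
      by (simp add: measure_std_normal_atMost Phi_ab Times_in_borel)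
  next
    assume "\<not> 0 \<le> t1" "\<not> 0 \<le> t2"
    then show ?thesis using assms by (simp add: E_def)
  qed
  finally show "Pr t1 t2 (\<lambda>p. 0 \<le> t1 \<and> fst (hommel \<alpha> p) \<or> 0 \<le> t2 \<and> snd (hommel \<alpha> p)) \<le> \<alpha>" .
qed

lemma strong_FWER_global_null:
  "strong_FWER \<alpha> D \<Longrightarrow> measure Z_M (Phi_preimage (\<lambda>p. fst (D p)) \<union> Phi_preimage (\<lambda>p. snd (D p))) \<le> \<alpha>"
  unfolding strong_FWER_def by (erule allE[of _ 0], erule allE[of _ 0])
    (simp add: Pr_null_eq Phi_preimage_def Un_def)

lemma hommel_exhausts_level:
  assumes "0 < \<alpha>" "\<alpha> < 1"
  shows "measure Z_M (Phi_preimage (\<lambda>p. fst (hommel \<alpha> p)) \<union> Phi_preimage (\<lambda>p. snd (hommel \<alpha> p))) = \<alpha>"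
proof -
  define a b where "a = Phi_inv \<alpha>" and "b = Phi_inv (\<alpha> / 2)"
  have Phi_ab: "Phi a = \<alpha>" "Phi b = \<alpha> / 2"
    using assms by (simp_all add: a_def b_def Phi_Phi_inv)
  have "b < a"
    using Phi_inv_half_less assms by (simp add: a_def b_def)
  have "Phi_preimage (\<lambda>p. fst (hommel \<alpha> p)) \<union> Phi_preimage (\<lambda>p. snd (hommel \<alpha> p))
      = {z. fst z \<le> b \<or> snd z \<le> b \<or> fst z \<le> a \<and> snd z \<le> a}"
    by (auto simp: Phi_preimage_def hommel_Phi[OF Phi_ab])
  then show ?thesis
    using measure_hommel_region[OF \<open>b < a\<close> Phi_ab] by simp
qed

text \<open>Pointwise, Hommel's decisions maximise the Lagrangian gain (the weights of the rejected
  hypotheses minus \<open>c\<close> for rejecting at all) among all decisions allowed by marginal nominality.\<close>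

lemma hommel_maximises_gain:
  fixes u1 u2 a b c w1 w2 :: real and s1 s2 :: bool
  assumes "s1 \<Longrightarrow> u1 \<le> a" "s2 \<Longrightarrow> u2 \<le> a" "0 \<le> w1" "0 \<le> w2"
    and "u1 \<le> b \<Longrightarrow> c \<le> w1" "b < u1 \<Longrightarrow> w1 \<le> c"
    and "u2 \<le> b \<Longrightarrow> c \<le> w2" "b < u2 \<Longrightarrow> w2 \<le> c"
    and "u1 \<le> a \<Longrightarrow> u2 \<le> a \<Longrightarrow> c \<le> w1 + w2"
  defines "h1 \<equiv> u1 \<le> b \<or> u1 \<le> a \<and> u2 \<le> a" and "h2 \<equiv> u2 \<le> b \<or> u1 \<le> a \<and> u2 \<le> a"
  shows "of_bool s1 * w1 + of_bool s2 * w2 - c * of_bool (s1 \<or> s2)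
    \<le> of_bool h1 * w1 + of_bool h2 * w2 - c * of_bool (h1 \<or> h2)"
  using assms
  by (cases s1; cases s2; cases "u1 \<le> b"; cases "u2 \<le> b"; cases "u1 \<le> a"; cases "u2 \<le> a") auto

lemma integral_le_by_lagrangian:
  fixes w1 w2 :: "'a \<Rightarrow> real"
  assumes "finite_measure M" "integrable M w1" "integrable M w2" "0 \<le> c"
    and sets: "S1 \<in> sets M" "S2 \<in> sets M" "H1 \<in> sets M" "H2 \<in> sets M"
    and size: "measure M (S1 \<union> S2) \<le> measure M (H1 \<union> H2)"
    and gain: "\<And>x. x \<in> space M \<Longrightarrow>
        indicator S1 x * w1 x + indicator S2 x * w2 x - c * indicator (S1 \<union> S2) x
      \<le> indicator H1 x * w1 x + indicator H2 x * w2 x - c * indicator (H1 \<union> H2) x"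
  shows "(\<integral>x. indicator S1 x * w1 x \<partial>M) + (\<integral>x. indicator S2 x * w2 x \<partial>M)
    \<le> (\<integral>x. indicator H1 x * w1 x \<partial>M) + (\<integral>x. indicator H2 x * w2 x \<partial>M)"
proof -
  interpret finite_measure M by fact
  define g where "g A B x = indicator A x * w1 x + indicator B x * w2 x - c * indicator (A \<union> B) x"
    for A B x
  have g: "integrable M (g A B)"
    "integral\<^sup>L M (g A B)
      = (\<integral>x. indicator A x * w1 x \<partial>M) + (\<integral>x. indicator B x * w2 x \<partial>M) - c * measure M (A \<union> B)"
    if "A \<in> sets M" "B \<in> sets M" for A B
  proof -
    have IA: "integrable M (\<lambda>x. indicator A x * w1 x)" and IB: "integrable M (\<lambda>x. indicator B x * w2 x)"
      using integrable_real_mult_indicator that assms(2,3) by (simp_all add: mult.commute)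
    have IC: "integrable M (\<lambda>x. c * indicator (A \<union> B) x)"
      using that by (intro integrable_mult_right integrable_real_indicator) (simp_all add: less_top[symmetric])
    show "integrable M (g A B)"
      unfolding g_def using IA IB IC by (intro Bochner_Integration.integrable_diff Bochner_Integration.integrable_add)
    show "integral\<^sup>L M (g A B) = (\<integral>x. indicator A x * w1 x \<partial>M) + (\<integral>x. indicator B x * w2 x \<partial>M) - c * measure M (A \<union> B)"
      unfolding g_def using that
      by (simp add: Bochner_Integration.integral_diff[OF Bochner_Integration.integrable_add[OF IA IB] IC]
          Bochner_Integration.integral_add[OF IA IB] sets.Int_space_eq2)
  qed
  have "integral\<^sup>L M (g S1 S2) \<le> integral\<^sup>L M (g H1 H2)"
    using sets by (intro integral_mono g(1)) (simp_all add: g_def gain)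
  then show ?thesis
    using mult_left_mono[OF size \<open>0 \<le> c\<close>] by (simp add: g(2) sets)
qed

lemma Pi1_eq_integral:
  assumes "is_procedure D"
  shows "Pi1 \<theta> D
    = ((\<integral>z. indicator (Phi_preimage (\<lambda>p. fst (D p))) z * gauss_lr \<theta> (fst z) \<partial>Z_M)
       + (\<integral>z. indicator (Phi_preimage (\<lambda>p. snd (D p))) z * gauss_lr \<theta> (snd z) \<partial>Z_M)) / 2"
  using Phi_preimage_procedure_in_borel[OF assms, of fst] Phi_preimage_procedure_in_borel[OF assms, of snd]
  by (simp add: Pi1_def Pr_eq_integral)

lemma marg_nominal_Phi_preimage:
  assumes "marg_nominal \<alpha> D" "Phi a = \<alpha>"
  shows "z \<in> Phi_preimage (\<lambda>p. fst (D p)) \<Longrightarrow> fst z \<le> a"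
    and "z \<in> Phi_preimage (\<lambda>p. snd (D p)) \<Longrightarrow> snd z \<le> a"
proof -
  have nominal: "\<alpha> < Phi x \<Longrightarrow> \<not> fst (D (Phi x, Phi y))" "\<alpha> < Phi y \<Longrightarrow> \<not> snd (D (Phi x, Phi y))"
    for x y
    using assms(1) by (simp_all add: marg_nominal_def)
  have "\<alpha> < Phi x" if "\<not> x \<le> a" for x
    using that assms(2) by (metis Phi_less_iff not_le)
  with nominal show "z \<in> Phi_preimage (\<lambda>p. fst (D p)) \<Longrightarrow> fst z \<le> a"
    and "z \<in> Phi_preimage (\<lambda>p. snd (D p)) \<Longrightarrow> snd z \<le> a"
    unfolding Phi_preimage_def by blast+
qed

lemma Pi1_hommel_optimal:
  assumes "0 < \<alpha>" "\<alpha> < 1" "\<theta> \<le> 0" "- ln 2 \<le> \<theta> * (Phi_inv \<alpha> - Phi_inv (\<alpha> / 2))"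
    and D: "is_procedure D" "marg_nominal \<alpha> D" "strong_FWER \<alpha> D"
  shows "Pi1 \<theta> D \<le> Pi1 \<theta> (hommel \<alpha>)"
proof -
  define a b where "a = Phi_inv \<alpha>" and "b = Phi_inv (\<alpha> / 2)"
  have Phi_ab: "Phi a = \<alpha>" "Phi b = \<alpha> / 2"
    using assms by (simp_all add: a_def b_def Phi_Phi_inv)
  define S1 S2 H1 H2 where "S1 = Phi_preimage (\<lambda>p. fst (D p))" and "S2 = Phi_preimage (\<lambda>p. snd (D p))"
    and "H1 = Phi_preimage (\<lambda>p. fst (hommel \<alpha> p))" and "H2 = Phi_preimage (\<lambda>p. snd (hommel \<alpha> p))"
  have H: "H1 = {z. fst z \<le> b \<or> fst z \<le> a \<and> snd z \<le> a}" "H2 = {z. snd z \<le> b \<or> fst z \<le> a \<and> snd z \<le> a}"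
    by (auto simp: H1_def H2_def Phi_preimage_def hommel_Phi[OF Phi_ab])
  have sets: "S1 \<in> sets Z_M" "S2 \<in> sets Z_M" "H1 \<in> sets Z_M" "H2 \<in> sets Z_M"
    unfolding S1_def S2_def H1_def H2_def
    using Phi_preimage_procedure_in_borel D(1) is_procedure_hommel by simp_all
  have size: "measure Z_M (S1 \<union> S2) \<le> measure Z_M (H1 \<union> H2)"
    using strong_FWER_global_null[OF D(3)] hommel_exhausts_level[OF assms(1,2)]
    by (simp add: S1_def S2_def H1_def H2_def)
  have gain: "indicator S1 z * gauss_lr \<theta> (fst z) + indicator S2 z * gauss_lr \<theta> (snd z)
      - gauss_lr \<theta> b * indicator (S1 \<union> S2) z
    \<le> indicator H1 z * gauss_lr \<theta> (fst z) + indicator H2 z * gauss_lr \<theta> (snd z)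
      - gauss_lr \<theta> b * indicator (H1 \<union> H2) z" for z
    using hommel_maximises_gain[of "z \<in> S1" "fst z" a "z \<in> S2" "snd z"
        "gauss_lr \<theta> (fst z)" "gauss_lr \<theta> (snd z)" b "gauss_lr \<theta> b"]
      marg_nominal_Phi_preimage[OF D(2) Phi_ab(1), of z] gauss_lr_antimono[OF \<open>\<theta> \<le> 0\<close>]
      gauss_lr_le_add[OF \<open>\<theta> \<le> 0\<close> assms(4)[folded a_def b_def], of "fst z" "snd z"]
    unfolding S1_def S2_def H indicator_def by auto
  have "(\<integral>z. indicator S1 z * gauss_lr \<theta> (fst z) \<partial>Z_M) + (\<integral>z. indicator S2 z * gauss_lr \<theta> (snd z) \<partial>Z_M)
    \<le> (\<integral>z. indicator H1 z * gauss_lr \<theta> (fst z) \<partial>Z_M) + (\<integral>z. indicator H2 z * gauss_lr \<theta> (snd z) \<partial>Z_M)"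
    using integrable_gauss_lr[of \<theta> 0] integrable_gauss_lr[of 0 \<theta>]
    by (intro integral_le_by_lagrangian[OF Z.finite_measure_axioms _ _ _ sets size gain]) simp_all
  then show ?thesis
    using D(1) is_procedure_hommel by (simp add: Pi1_eq_integral S1_def S2_def H1_def H2_def)
qed

theorem mainTheorem4:
  fixes \<alpha> \<theta> :: real
  assumes "0 < \<alpha>" and "\<alpha> < 1 / 2"
    and "\<theta> < 0"
    and "\<theta> > - ln 2 / (Phi_inv \<alpha> - Phi_inv (\<alpha> / 2))"
  shows "is_procedure (hommel \<alpha>) \<and> strong_FWER \<alpha> (hommel \<alpha>) \<and> marg_nominal \<alpha> (hommel \<alpha>) \<and>
         (\<forall>D. is_procedure D \<and> marg_nominal \<alpha> D \<and> strong_FWER \<alpha> D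
              \<longrightarrow> Pi1 \<theta> D \<le> Pi1 \<theta> (hommel \<alpha>))"
proof -
  define d where "d = Phi_inv \<alpha> - Phi_inv (\<alpha> / 2)"
  have "0 < d"
    using Phi_inv_half_less assms(1,2) by (simp add: d_def)
  then have "- ln 2 \<le> \<theta> * (Phi_inv \<alpha> - Phi_inv (\<alpha> / 2))"
    using assms(4) pos_divide_less_eq[of d "- ln 2" \<theta>] unfolding d_def by auto
  with assms show ?thesis
    by (simp add: is_procedure_hommel strong_FWER_hommel marg_nominal_hommel Pi1_hommel_optimal)
qed

end
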